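(* For every ideal $I\subset\mathbb{K}[S_M]$ and every sparse order $\prec$ on $\mathbb{K}[S_M]$, there exists a finite sparse Gröbner basis of $I$ with respect to $\prec$.
   Context: Let $\mathbb{K}$ be a field of characteristic $0$, $M\subset\mathbb{R}^n$ a polytope with $0\in M$, $S_M\subset\mathbb{Z}^n$ the affine semigroup generated by $M\cap\mathbb{Z}^n$ and $S_M^h\subset\mathbb{Z}^{n+1}$ the one generated by $\{(s,1):s\in M\cap\mathbb{Z}^n\}$, both assumed pointed. $\mathbb{K}[S]$ is the semigroup algebra with monomials $X^s$, $X^sX^t=X^{s+t}$. The affine degree $\delta^A(X^s)$ of a monomial of $\mathbb{K}[S_M]$ is the least $d\in\mathbb{N}$ with $(s,d)\in S_M^h$; the homogenization of a monomial is $\chi^{-1}(X^s)=X^{(s,\delta^A(X^s))}\in\mathbb{K}[S_M^h]$, and for $X^{(s,d)}\in\mathbb{K}[S_M^h]$ its sparse degree is $\delta(X^{(s,d)})=\delta^A(X^s)$. A sparse order is defined from a monomial order $<_M$ on $\mathbb{K}[S_M]$ by $X^s\prec X^r$ iff $\delta^A(X^s)<\delta^A(X^r)$, or equality and $X^s<_MX^r$. Divisibility: $X^{(s,d_s)}\mid_\delta X^{(r,d_r)}$ if some monomial $X^{(t,d_t)}\in\mathbb{K}[S_M^h]$ satisfies $X^{(s,d_s)}X^{(t,d_t)}=X^{(r,d_r)}$ and $\delta(X^{(s,d_s)})+\delta(X^{(t,d_t)})=\delta(X^{(r,d_r)})$; for monomials of $\mathbb{K}[S_M]$, $X^s\mid_\delta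 X^r$ iff $\chi^{-1}(X^s)\mid_\delta\chi^{-1}(X^r)$. A sparse Gröbner basis of $I$ w.r.t. $\prec$ is a subset of $I$ generating $I$ such that every nonzero $f\in I$ has some element $g$ of it with $\mathrm{LM}_\prec(g)\mid_\delta\mathrm{LM}_\prec(f)$. *)

theory Defs
  imports "HOL-Analysis.Analysis" "HOL-Library.Poly_Mapping"
begin

definition lattice_points :: "(real ^ 'n) set \<Rightarrow> (int ^ 'n) set" where
  "lattice_points M = {z. (\<chi> i. real_of_int (z $ i)) \<in> M}"

definition is_polytope :: "(real ^ 'n) set \<Rightarrow> bool" where
  "is_polytope M \<longleftrightarrow> (\<exists>P. finite P \<and> M = convex hull P)"

inductive_set monoid_gen :: "'a::monoid_add set \<Rightarrow> 'a set" for A where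
  zero: "0 \<in> monoid_gen A"
| add: "s \<in> monoid_gen A \<Longrightarrow> a \<in> A \<Longrightarrow> s + a \<in> monoid_gen A"

definition pointed :: "'a::group_add set \<Rightarrow> bool" where
  "pointed S \<longleftrightarrow> (\<forall>s\<in>S. - s \<in> S \<longrightarrow> s = 0)"

definition SM :: "(real ^ 'n) set \<Rightarrow> (int ^ 'n) set" where
  "SM M = monoid_gen (lattice_points M)"

text \<open>S_M^h, a subset of Z^(n+1) = int^'n \<times> int\<close>
definition SMh :: "(real ^ 'n) set \<Rightarrow> ((int ^ 'n) \<times> int) set" where
  "SMh M = monoid_gen {(s, 1) | s. s \<in> lattice_points M}"

definition affine_deg :: "(real ^ 'n) set \<Rightarrow> int ^ 'n \<Rightarrow> nat" where
  "affine_deg M s = (LEAST d::nat. (s, int d) \<in> SMh M)"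

text \<open>Homogenization chi^{-1}(X^s) = X^(s, deg s) (on exponents)\<close>
definition homog :: "(real ^ 'n) set \<Rightarrow> int ^ 'n \<Rightarrow> (int ^ 'n) \<times> int" where
  "homog M s = (s, int (affine_deg M s))"

definition sparse_deg :: "(real ^ 'n) set \<Rightarrow> (int ^ 'n) \<times> int \<Rightarrow> nat" where
  "sparse_deg M sd = affine_deg M (fst sd)"

definition hdiv :: "(real ^ 'n) set \<Rightarrow> (int ^ 'n) \<times> int \<Rightarrow> (int ^ 'n) \<times> int \<Rightarrow> bool" where
  "hdiv M a b \<longleftrightarrow> (\<exists>c \<in> SMh M. a + c = b \<and> sparse_deg M a + sparse_deg M c = sparse_deg M b)"

definition sdiv :: "(real ^ 'n) set \<Rightarrow> int ^ 'n \<Rightarrow> int ^ 'n \<Rightarrow> bool" where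
  "sdiv M s r \<longleftrightarrow> hdiv M (homog M s) (homog M r)"

text \<open>Elements of K[S] are finitely supported maps from exponents to K, supported in S;
  the product is the convolution product of poly_mapping, so X^s X^t = X^(s+t).\<close>
definition salg :: "(int ^ 'n) set \<Rightarrow> ((int ^ 'n) \<Rightarrow>\<^sub>0 'k::field) set" where
  "salg S = {f. Poly_Mapping.keys f \<subseteq> S}"

definition is_ideal :: "('a \<Rightarrow>\<^sub>0 'k::field) set \<Rightarrow> ('a::monoid_add \<Rightarrow>\<^sub>0 'k) set \<Rightarrow> bool" where
  "is_ideal R I \<longleftrightarrow> I \<subseteq> R \<and> 0 \<in> I \<and> (\<forall>f\<in>I. \<forall>g\<in>I. f + g \<in> I)
      \<and> (\<forall>f\<in>I. \<forall>h\<in>R. h * f \<in> I)"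

definition ideal_gen :: "('a \<Rightarrow>\<^sub>0 'k::field) set \<Rightarrow> ('a::monoid_add \<Rightarrow>\<^sub>0 'k) set \<Rightarrow> ('a \<Rightarrow>\<^sub>0 'k) set" where
  "ideal_gen R G = \<Inter>{J. is_ideal R J \<and> G \<subseteq> J}"

definition monomial_order :: "(int ^ 'n) set \<Rightarrow> (int ^ 'n \<Rightarrow> int ^ 'n \<Rightarrow> bool) \<Rightarrow> bool" where
  "monomial_order S lt \<longleftrightarrow>
     (\<forall>s\<in>S. \<not> lt s s) \<and>
     (\<forall>s\<in>S. \<forall>t\<in>S. \<forall>u\<in>S. lt s t \<longrightarrow> lt t u \<longrightarrow> lt s u) \<and>
     (\<forall>s\<in>S. \<forall>t\<in>S. s \<noteq> t \<longrightarrow> lt s t \<or> lt t s) \<and>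
     (\<forall>s\<in>S. \<forall>t\<in>S. \<forall>u\<in>S. lt s t \<longrightarrow> lt (s + u) (t + u)) \<and>
     (\<forall>s\<in>S. s \<noteq> 0 \<longrightarrow> lt 0 s)"

definition sparse_order :: "(real ^ 'n) set \<Rightarrow> (int ^ 'n \<Rightarrow> int ^ 'n \<Rightarrow> bool) \<Rightarrow> int ^ 'n \<Rightarrow> int ^ 'n \<Rightarrow> bool" where
  "sparse_order M lt s r \<longleftrightarrow>
     affine_deg M s < affine_deg M r \<or> (affine_deg M s = affine_deg M r \<and> lt s r)"

definition lead_exp :: "('a \<Rightarrow> 'a \<Rightarrow> bool) \<Rightarrow> ('a \<Rightarrow>\<^sub>0 'k::zero) \<Rightarrow> 'a" where
  "lead_exp prec f = (THE s. s \<in> Poly_Mapping.keys f \<and> (\<forall>t\<in>Poly_Mapping.keys f. t \<noteq> s \<longrightarrow> prec t s))"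

definition sparse_groebner_basis ::
  "(real ^ 'n) set \<Rightarrow> (int ^ 'n \<Rightarrow> int ^ 'n \<Rightarrow> bool) \<Rightarrow> ((int ^ 'n) \<Rightarrow>\<^sub>0 'k::field) set
     \<Rightarrow> ((int ^ 'n) \<Rightarrow>\<^sub>0 'k) set \<Rightarrow> bool" where
  "sparse_groebner_basis M prec I G \<longleftrightarrow>
     G \<subseteq> I \<and> ideal_gen (salg (SM M)) G = I \<and>
     (\<forall>f\<in>I. f \<noteq> 0 \<longrightarrow> (\<exists>g\<in>G. g \<noteq> 0 \<and> sdiv M (lead_exp prec g) (lead_exp prec f)))"

end

theory Submission
  imports Defs
begin

text \<open>Sparse divisibility of \<open>X^s\<close> into \<open>X^r\<close> means exactly that \<open>homog r - homog s\<close> lies in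
  \<open>S_M^h\<close>, a monoid generated by the finitely many points \<open>(p, 1)\<close> with \<open>p\<close> a lattice point of
  \<open>M\<close>. Dickson's lemma for finitely generated monoids therefore yields finitely many elements of
  \<open>I\<close> whose leading exponents sparse-divide every leading exponent of \<open>I\<close>. Since \<open>\<prec>\<close> refines
  the affine degree and each degree level of \<open>S_M^h\<close> is finite, \<open>\<prec>\<close> is well-founded on \<open>S_M\<close>;
  it is not compatible with multiplication in general, but it is compatible with multiplication
  by the quotient of a sparse division, so the usual reduction shows that these elements generate
  \<open>I\<close>.\<close>

lemma monoid_gen_add:
  assumes "x \<in> monoid_gen A" and "y \<in> monoid_gen A"
  shows "x + y \<in> monoid_gen A"
  using assms(2)
proof (induction y rule: monoid_gen.induct)
  case zero
  show ?case using assms(1) by simp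
next
  case (add s a)
  then show ?case by (metis add.assoc monoid_gen.add)
qed

lemma monoid_gen_mono: "A \<subseteq> B \<Longrightarrow> monoid_gen A \<subseteq> monoid_gen B"
proof
  fix x assume "x \<in> monoid_gen A" and "A \<subseteq> B"
  then show "x \<in> monoid_gen B"
    by (induction x rule: monoid_gen.induct) (auto intro: monoid_gen.intros)
qed

lemma monoid_gen_empty: "monoid_gen {} = {0}"
proof
  show "monoid_gen {} \<subseteq> {0}"
  proof
    fix x assume "x \<in> monoid_gen {}"
    then show "x \<in> {0}" by (induction x rule: monoid_gen.induct) auto
  qed
qed (auto intro: monoid_gen.zero)

primrec nat_multiple :: "nat \<Rightarrow> 'a::monoid_add \<Rightarrow> 'a" where
  "nat_multiple 0 a = 0"
| "nat_multiple (Suc n) a = nat_multiple n a + a"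

lemma nat_multiple_add:
  "nat_multiple (m + n) a = nat_multiple m a + nat_multiple n (a::'a::comm_monoid_add)"
  by (induction n) (auto simp: add.assoc)

lemma nat_multiple_diff:
  "m \<le> n \<Longrightarrow> nat_multiple n a - nat_multiple m a = nat_multiple (n - m) (a::'a::ab_group_add)"
  by (metis add_diff_cancel_left' le_add_diff_inverse nat_multiple_add)

lemma nat_multiple_in_monoid_gen: "a \<in> A \<Longrightarrow> nat_multiple n a \<in> monoid_gen A"
  by (induction n) (auto intro: monoid_gen.intros)

lemma monoid_gen_insertE:
  fixes a :: "'a::comm_monoid_add"
  assumes "z \<in> monoid_gen (insert a A)"
  obtains x n where "x \<in> monoid_gen A" and "z = x + nat_multiple n a"
proof -
  from assms have "\<exists>x n. x \<in> monoid_gen A \<and> z = x + nat_multiple n a"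
  proof (induction z rule: monoid_gen.induct)
    case zero
    show ?case by (intro exI[of _ "0::'a"] exI[of _ "0::nat"]) (auto intro: monoid_gen.zero)
  next
    case (add s b)
    then obtain x n where x: "x \<in> monoid_gen A" and s: "s = x + nat_multiple n a" by blast
    show ?case
    proof (cases "b = a")
      case True
      then show ?thesis using x s by (intro exI[of _ x] exI[of _ "Suc n"]) (simp add: add.assoc)
    next
      case False
      then have "x + b \<in> monoid_gen A" using add.hyps(2) x by (auto intro: monoid_gen.add)
      moreover have "s + b = (x + b) + nat_multiple n a" using s by (simp add: ac_simps)
      ultimately show ?thesis by blast
    qed
  qed
  then show ?thesis using that by blast
qed

definition finite_basis :: "'a::ab_group_add set \<Rightarrow> 'a set \<Rightarrow> 'a set \<Rightarrow> bool" where
  "finite_basis A E F \<longleftrightarrow> F \<subseteq> E \<and> finite F \<and> (\<forall>e\<in>E. \<exists>f\<in>F. e - f \<in> monoid_gen A)"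

text \<open>Dickson's lemma, by induction on the generators: an element \<open>x + n a\<close> of \<open>E\<close> with \<open>n\<close> at
  least the largest height \<open>m\<close> used in a basis of the \<open>A\<close>-parts of \<open>E\<close> lies above that basis, and
  each of the finitely many slices \<open>n < m\<close> has a basis of its own.\<close>
lemma finite_basis_insert:
  fixes a :: "'a::ab_group_add"
  assumes basis: "\<And>X. X \<subseteq> monoid_gen A \<Longrightarrow> finite_basis A X (basis X)"
    and E: "E \<subseteq> monoid_gen (insert a A)"
  shows "\<exists>F. finite_basis (insert a A) E F"
proof -
  define Q where "Q j = {x \<in> monoid_gen A. x + nat_multiple j a \<in> E}" for j
  define P where "P = (\<Union>j. Q j)"
  define height where "height x = (SOME n. x + nat_multiple n a \<in> E)" for x
  define m where "m = Max (height ` basis P)"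
  define F where "F = (\<lambda>x. x + nat_multiple (height x) a) ` basis P
      \<union> (\<Union>j<m. (\<lambda>x. x + nat_multiple j a) ` basis (Q j))"
  have basis_P: "basis P \<subseteq> P" "finite (basis P)" "\<forall>x\<in>P. \<exists>f\<in>basis P. x - f \<in> monoid_gen A"
    using basis[of P] by (auto simp: finite_basis_def P_def Q_def)
  have basis_Q: "basis (Q j) \<subseteq> Q j" "finite (basis (Q j))"
      "\<forall>x\<in>Q j. \<exists>f\<in>basis (Q j). x - f \<in> monoid_gen A" for j
    using basis[of "Q j"] by (auto simp: finite_basis_def Q_def)
  have height: "x + nat_multiple (height x) a \<in> E" if "x \<in> P" for x
    using that unfolding P_def Q_def height_def by (auto intro: someI)
  have sub: "monoid_gen A \<subseteq> monoid_gen (insert a A)" by (rule monoid_gen_mono) blast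
  have "\<exists>f\<in>F. e - f \<in> monoid_gen (insert a A)" if "e \<in> E" for e
  proof -
    obtain x n where x: "x \<in> monoid_gen A" and e: "e = x + nat_multiple n a"
      using \<open>e \<in> E\<close> E monoid_gen_insertE by blast
    show ?thesis
    proof (cases "m \<le> n")
      case True
      have "x \<in> P" using x e \<open>e \<in> E\<close> by (auto simp: P_def Q_def)
      then obtain f where f: "f \<in> basis P" "x - f \<in> monoid_gen A" using basis_P(3) by blast
      have "height f \<le> n"
        using True f(1) basis_P(2) unfolding m_def
        by (meson Max_ge finite_imageI image_eqI order_trans)
      then have "e - (f + nat_multiple (height f) a) = (x - f) + nat_multiple (n - height f) a"
        using e by (simp add: algebra_simps flip: nat_multiple_diff)
      also have "\<dots> \<in> monoid_gen (insert a A)"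
        using f(2) sub by (blast intro: monoid_gen_add nat_multiple_in_monoid_gen)
      finally show ?thesis using f(1) unfolding F_def by blast
    next
      case False
      have "x \<in> Q n" using x e \<open>e \<in> E\<close> by (simp add: Q_def)
      then obtain f where f: "f \<in> basis (Q n)" "x - f \<in> monoid_gen A" using basis_Q(3) by blast
      have "f + nat_multiple n a \<in> F" using f(1) False unfolding F_def by auto
      moreover have "e - (f + nat_multiple n a) = x - f" using e by (simp add: algebra_simps)
      ultimately show ?thesis using f(2) sub by (metis subsetD)
    qed
  qed
  moreover have "F \<subseteq> E" using basis_P(1) basis_Q(1) height unfolding F_def Q_def by auto
  moreover have "finite F" using basis_P(2) basis_Q(2) unfolding F_def by auto
  ultimately show ?thesis unfolding finite_basis_def by blast
qed

lemma monoid_gen_finite_basis: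
  fixes A :: "'a::ab_group_add set"
  assumes "finite A" and "E \<subseteq> monoid_gen A"
  shows "\<exists>F. finite_basis A E F"
  using assms
proof (induction A arbitrary: E rule: finite_induct)
  case empty
  then have "finite E" by (auto simp: monoid_gen_empty intro: finite_subset)
  then show ?case by (auto simp: finite_basis_def monoid_gen_empty)
next
  case (insert a A)
  from choice[of "\<lambda>X F. X \<subseteq> monoid_gen A \<longrightarrow> finite_basis A X F"] insert.IH
  obtain basis where "\<And>X. X \<subseteq> monoid_gen A \<Longrightarrow> finite_basis A X (basis X)" by blast
  then show ?case using insert.prems by (rule finite_basis_insert)
qed

lemma finite_lattice_points:
  assumes "bounded M"
  shows "finite (lattice_points M)"
proof -
  obtain B where B: "\<And>x. x \<in> M \<Longrightarrow> norm x \<le> B" using assms by (meson bounded_iff)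
  define C where "C = \<lceil>B\<rceil>"
  have "z $ i \<in> {-C..C}" if "z \<in> lattice_points M" for z i
  proof -
    have "\<bar>real_of_int (z $ i)\<bar> \<le> norm (\<chi> i. real_of_int (z $ i))"
      using component_le_norm_cart[of "\<chi> i. real_of_int (z $ i)" i] by simp
    also have "\<dots> \<le> B" using B that by (simp add: lattice_points_def)
    finally show ?thesis unfolding C_def by (simp add: abs_le_iff) linarith
  qed
  then have "lattice_points M \<subseteq> vec_lambda ` (PiE UNIV (\<lambda>_. {-C..C}))"
    by (auto intro!: image_eqI[of _ _ "vec_nth z" for z])
  then show ?thesis by (rule finite_subset) (intro finite_imageI finite_PiE; simp)
qed

lemma SMhD: "x \<in> SMh M \<Longrightarrow> fst x \<in> SM M \<and> 0 \<le> snd x"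
  unfolding SMh_def SM_def
  by (induction x rule: monoid_gen.induct) (auto intro: monoid_gen.intros)

lemma homog_in_SMh:
  assumes "s \<in> SM M"
  shows "homog M s \<in> SMh M"
proof -
  from assms have "\<exists>d. (s, int d) \<in> SMh M"
    unfolding SM_def
  proof (induction s rule: monoid_gen.induct)
    case zero
    show ?case by (rule exI[of _ 0]) (simp add: SMh_def zero_prod_def[symmetric] monoid_gen.zero)
  next
    case (add s p)
    then obtain d where "(s, int d) + (p, 1) \<in> SMh M"
      unfolding SMh_def by (blast intro: monoid_gen.add)
    then show ?case by (intro exI[of _ "Suc d"]) (simp add: add.commute)
  qed
  then show ?thesis unfolding homog_def affine_deg_def by (rule LeastI_ex)
qed

lemma affine_deg_le: "(s, int d) \<in> SMh M \<Longrightarrow> affine_deg M s \<le> d"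
  unfolding affine_deg_def by (rule Least_le)

lemma affine_deg_add_le:
  assumes "s \<in> SM M" and "t \<in> SM M"
  shows "affine_deg M (s + t) \<le> affine_deg M s + affine_deg M t"
proof (rule affine_deg_le)
  have "homog M s + homog M t \<in> SMh M"
    using homog_in_SMh[OF assms(1)] homog_in_SMh[OF assms(2)] unfolding SMh_def
    by (rule monoid_gen_add)
  then show "(s + t, int (affine_deg M s + affine_deg M t)) \<in> SMh M" by (simp add: homog_def)
qed

lemma sdiv_iff:
  "sdiv M s r \<longleftrightarrow> r - s \<in> SM M \<and> affine_deg M r = affine_deg M s + affine_deg M (r - s)"
proof
  assume "sdiv M s r"
  then obtain c where c: "c \<in> SMh M" "homog M s + c = homog M r"
      "sparse_deg M (homog M s) + sparse_deg M c = sparse_deg M (homog M r)"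
    unfolding sdiv_def hdiv_def by blast
  have "fst c = r - s" using c(2) by (metis add_diff_cancel_left' fst_add fst_conv homog_def)
  then show "r - s \<in> SM M \<and> affine_deg M r = affine_deg M s + affine_deg M (r - s)"
    using c SMhD[OF c(1)] by (simp add: sparse_deg_def homog_def)
next
  assume "r - s \<in> SM M \<and> affine_deg M r = affine_deg M s + affine_deg M (r - s)"
  then show "sdiv M s r" unfolding sdiv_def hdiv_def
    by (intro bexI[of _ "homog M (r - s)"] homog_in_SMh) (auto simp: homog_def sparse_deg_def)
qed

lemma sdiv_if_homog_diff:
  assumes s: "s \<in> SM M" and diff: "homog M r - homog M s \<in> SMh M"
  shows "sdiv M s r"
proof -
  have u: "r - s \<in> SM M" and le: "affine_deg M s \<le> affine_deg M r"
    using SMhD[OF diff] by (auto simp: homog_def)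
  then have "(r - s, int (affine_deg M r - affine_deg M s)) \<in> SMh M"
    using diff by (simp add: homog_def of_nat_diff)
  then have "affine_deg M (r - s) \<le> affine_deg M r - affine_deg M s" by (rule affine_deg_le)
  moreover have "affine_deg M r \<le> affine_deg M s + affine_deg M (r - s)"
    using affine_deg_add_le[OF s u] by simp
  ultimately show ?thesis using u le by (simp add: sdiv_iff)
qed

text \<open>Every element of \<open>S_M^h\<close> of height \<open>d + 1\<close> is one of height \<open>d\<close> plus a lattice point.\<close>
lemma finite_SMh_level:
  assumes "finite (lattice_points M)"
  shows "finite {s. (s, int d) \<in> SMh M}"
proof (induction d)
  case 0
  have "s = 0" if "(s, 0) \<in> SMh M" for s
    using that unfolding SMh_def
  proof (cases rule: monoid_gen.cases)
    case (add x p)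
    then have "0 \<le> snd x" using SMhD SMh_def by blast
    with add show ?thesis by (auto simp: prod_eq_iff)
  qed (simp add: zero_prod_def)
  then have "{s. (s, int 0) \<in> SMh M} \<subseteq> {0}" by auto
  then show ?case by (rule finite_subset) simp
next
  case (Suc d)
  have "s \<in> (\<lambda>(x, p). x + p) ` ({x. (x, int d) \<in> SMh M} \<times> lattice_points M)"
    if "(s, int (Suc d)) \<in> SMh M" for s
    using that[unfolded SMh_def]
  proof (cases rule: monoid_gen.cases)
    case (add x a)
    then obtain p where p: "a = (p, 1)" "p \<in> lattice_points M" by auto
    with add(1) have "x = (s - p, int d)" by (auto simp: prod_eq_iff)
    with add(2) p show ?thesis by (auto simp: SMh_def intro!: image_eqI[of _ _ "(s - p, p)"])
  qed (simp add: zero_prod_def)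
  then have "{s. (s, int (Suc d)) \<in> SMh M}
      \<subseteq> (\<lambda>(x, p). x + p) ` ({x. (x, int d) \<in> SMh M} \<times> lattice_points M)" by blast
  then show ?case by (rule finite_subset) (use Suc assms in auto)
qed

lemma lookup_single_mult:
  fixes g :: "'a::ab_group_add \<Rightarrow>\<^sub>0 'k::semiring_0" and c :: 'k
  shows "Poly_Mapping.lookup (Poly_Mapping.single u c * g) k = c * Poly_Mapping.lookup g (k - u)"
proof -
  have "Poly_Mapping.lookup (Poly_Mapping.single u c * g) k
      = Sum_any (\<lambda>l. (c when u = l) * Sum_any (\<lambda>q. Poly_Mapping.lookup g q when k = l + q))"
    by (simp add: Poly_Mapping.lookup_mult Poly_Mapping.lookup_single)
  also have "\<dots> = Sum_any (\<lambda>l. c * Sum_any (\<lambda>q. Poly_Mapping.lookup g q when k = l + q) when l = u)"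
    by (rule Sum_any.cong) (auto simp: when_def)
  also have "\<dots> = c * Sum_any (\<lambda>q. Poly_Mapping.lookup g q when k = u + q)" by simp
  also have "Sum_any (\<lambda>q. Poly_Mapping.lookup g q when k = u + q)
      = Sum_any (\<lambda>q. Poly_Mapping.lookup g q when q = k - u)"
    by (rule Sum_any.cong) (auto simp: when_def algebra_simps)
  also have "\<dots> = Poly_Mapping.lookup g (k - u)" by simp
  finally show ?thesis .
qed

locale sparse_monomial_order =
  fixes M :: "(real ^ 'n) set" and lt :: "int ^ 'n \<Rightarrow> int ^ 'n \<Rightarrow> bool"
  assumes finite_lattice: "finite (lattice_points M)"
    and monomial_order: "monomial_order (SM M) lt"
begin

abbreviation deg :: "int ^ 'n \<Rightarrow> nat" where "deg \<equiv> affine_deg M"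

abbreviation sparse_less :: "int ^ 'n \<Rightarrow> int ^ 'n \<Rightarrow> bool" (infix "\<lessdot>" 50)
  where "sparse_less \<equiv> sparse_order M lt"

abbreviation lead :: "(int ^ 'n \<Rightarrow>\<^sub>0 'k::zero) \<Rightarrow> int ^ 'n" where "lead \<equiv> lead_exp (\<lessdot>)"

lemmas lt_irrefl = monomial_order[unfolded monomial_order_def, THEN conjunct1, rule_format]
lemmas lt_trans = monomial_order[unfolded monomial_order_def,
  THEN conjunct2, THEN conjunct1, rule_format]
lemmas lt_total = monomial_order[unfolded monomial_order_def,
  THEN conjunct2, THEN conjunct2, THEN conjunct1, rule_format]
lemmas lt_add_right = monomial_order[unfolded monomial_order_def,
  THEN conjunct2, THEN conjunct2, THEN conjunct2, THEN conjunct1, rule_format]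

lemma sparse_less_irrefl: "s \<in> SM M \<Longrightarrow> \<not> s \<lessdot> s"
  using lt_irrefl by (simp add: sparse_order_def)

lemma sparse_less_trans:
  "s \<in> SM M \<Longrightarrow> t \<in> SM M \<Longrightarrow> u \<in> SM M \<Longrightarrow> s \<lessdot> t \<Longrightarrow> t \<lessdot> u \<Longrightarrow> s \<lessdot> u"
  using lt_trans[of s t u] by (auto simp: sparse_order_def)

lemma sparse_less_total: "s \<in> SM M \<Longrightarrow> t \<in> SM M \<Longrightarrow> s \<noteq> t \<Longrightarrow> s \<lessdot> t \<or> t \<lessdot> s"
  using lt_total[of s t] by (auto simp: sparse_order_def)

text \<open>Compatibility with multiplication holds only along sparse divisibility, where the degrees
  add up; in general \<open>deg (u + s)\<close> may drop below \<open>deg u + deg s\<close>.\<close>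
lemma sparse_less_add_left:
  assumes s: "s \<in> SM M" and t: "t \<in> SM M" and u: "u \<in> SM M"
    and "t \<lessdot> s" and deg_add: "deg (u + s) = deg u + deg s"
  shows "u + t \<lessdot> u + s"
proof -
  have deg_ut: "deg (u + t) \<le> deg u + deg t" by (rule affine_deg_add_le[OF u t])
  show ?thesis
  proof (cases "deg t < deg s")
    case True
    then show ?thesis using deg_ut deg_add unfolding sparse_order_def by auto
  next
    case False
    with \<open>t \<lessdot> s\<close> have "deg t = deg s" and "lt t s" unfolding sparse_order_def by auto
    then have "lt (t + u) (s + u)" using lt_add_right s t u by blast
    then have "lt (u + t) (u + s)" by (simp only: add.commute)
    then show ?thesis using deg_ut deg_add \<open>deg t = deg s\<close> unfolding sparse_order_def by auto
  qed
qed

text \<open>Below a given exponent there are only the finitely many exponents of smaller or equal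
  affine degree.\<close>
lemma wf_sparse_less: "wf {(s, r). s \<in> SM M \<and> r \<in> SM M \<and> s \<lessdot> r}"
proof (rule wf_finite_segments)
  show "irrefl {(s, r). s \<in> SM M \<and> r \<in> SM M \<and> s \<lessdot> r}"
    using sparse_less_irrefl by (auto simp: irrefl_def)
  show "trans {(s, r). s \<in> SM M \<and> r \<in> SM M \<and> s \<lessdot> r}"
    using sparse_less_trans by (auto intro: transI)
  fix r
  have "{s. (s, r) \<in> {(s, r). s \<in> SM M \<and> r \<in> SM M \<and> s \<lessdot> r}}
      \<subseteq> (\<Union>d\<le>deg r. {s. (s, int d) \<in> SMh M})"
  proof
    fix s assume "s \<in> {s. (s, r) \<in> {(s, r). s \<in> SM M \<and> r \<in> SM M \<and> s \<lessdot> r}}"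
    then have "s \<in> SM M" and "deg s \<le> deg r" unfolding sparse_order_def by auto
    then show "s \<in> (\<Union>d\<le>deg r. {s. (s, int d) \<in> SMh M})"
      using homog_in_SMh[of s M] unfolding homog_def by blast
  qed
  then show "finite {s. (s, r) \<in> {(s, r). s \<in> SM M \<and> r \<in> SM M \<and> s \<lessdot> r}}"
    by (rule finite_subset) (simp add: finite_SMh_level[OF finite_lattice])
qed

lemma finite_has_sparse_greatest:
  "finite K \<Longrightarrow> K \<noteq> {} \<Longrightarrow> K \<subseteq> SM M \<Longrightarrow> \<exists>s\<in>K. \<forall>t\<in>K. t \<noteq> s \<longrightarrow> t \<lessdot> s"
proof (induction K rule: finite_ne_induct)
  case (singleton x)
  then show ?case by auto
next
  case (insert x K)
  then obtain s where s: "s \<in> K" "\<forall>t\<in>K. t \<noteq> s \<longrightarrow> t \<lessdot> s" by auto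
  show ?case
  proof (cases "s \<lessdot> x")
    case True
    have "t \<lessdot> x" if "t \<in> K" for t
      using s that True insert.prems sparse_less_trans[of t s x] by (cases "t = s") auto
    then show ?thesis by auto
  next
    case False
    then have "x \<lessdot> s" using sparse_less_total[of s x] s(1) insert by auto
    then show ?thesis using s by auto
  qed
qed

lemma lead_greatest:
  assumes "f \<noteq> 0" and keys: "Poly_Mapping.keys f \<subseteq> SM M"
  shows "lead f \<in> Poly_Mapping.keys f \<and> (\<forall>t\<in>Poly_Mapping.keys f. t \<noteq> lead f \<longrightarrow> t \<lessdot> lead f)"
proof -
  let ?greatest = "\<lambda>s. s \<in> Poly_Mapping.keys f \<and> (\<forall>t\<in>Poly_Mapping.keys f. t \<noteq> s \<longrightarrow> t \<lessdot> s)"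
  obtain s where s: "?greatest s"
    using finite_has_sparse_greatest[of "Poly_Mapping.keys f"] assms by auto
  have "s' = s" if "?greatest s'" for s'
  proof (rule ccontr)
    assume "s' \<noteq> s"
    then have "s \<lessdot> s" using s that keys sparse_less_trans[of s s' s] by auto
    then show False using s keys sparse_less_irrefl[of s] by auto
  qed
  then have "\<exists>!s. ?greatest s" using s by blast
  then show ?thesis unfolding lead_exp_def by (rule theI')
qed

lemma lead_in_SM: "f \<noteq> 0 \<Longrightarrow> Poly_Mapping.keys f \<subseteq> SM M \<Longrightarrow> lead f \<in> SM M"
  using lead_greatest by blast

text \<open>The other terms of the monomial multiple of \<open>g\<close> stay below \<open>lead f\<close> by
  \<open>sparse_less_add_left\<close>, whose degree hypothesis is exactly the sparse divisibility of
  \<open>lead f\<close> by \<open>lead g\<close>.\<close>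
lemma keys_lead_cancel_less:
  fixes f g :: "int ^ 'n \<Rightarrow>\<^sub>0 'k::field"
  assumes f: "f \<noteq> 0" "Poly_Mapping.keys f \<subseteq> SM M"
    and g: "g \<noteq> 0" "Poly_Mapping.keys g \<subseteq> SM M"
    and dvd: "sdiv M (lead g) (lead f)"
  defines "c \<equiv> Poly_Mapping.lookup f (lead f) / Poly_Mapping.lookup g (lead g)"
  shows "\<forall>k \<in> Poly_Mapping.keys (f - Poly_Mapping.single (lead f - lead g) c * g). k \<lessdot> lead f"
proof
  define u where "u = lead f - lead g"
  fix k assume "k \<in> Poly_Mapping.keys (f - Poly_Mapping.single (lead f - lead g) c * g)"
  then have coeff: "Poly_Mapping.lookup f k - c * Poly_Mapping.lookup g (k - u) \<noteq> 0"
    by (simp add: u_def Poly_Mapping.lookup_minus lookup_single_mult in_keys_iff)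
  have lead_f: "lead f \<in> Poly_Mapping.keys f" "\<forall>t\<in>Poly_Mapping.keys f. t \<noteq> lead f \<longrightarrow> t \<lessdot> lead f"
    using lead_greatest[OF f] by auto
  have lead_g: "lead g \<in> Poly_Mapping.keys g" "\<forall>t\<in>Poly_Mapping.keys g. t \<noteq> lead g \<longrightarrow> t \<lessdot> lead g"
    using lead_greatest[OF g] by auto
  have "k \<noteq> lead f"
    using coeff lead_g(1) by (auto simp: u_def c_def in_keys_iff)
  show "k \<lessdot> lead f"
  proof (cases "k \<in> Poly_Mapping.keys f")
    case True
    then show ?thesis using lead_f(2) \<open>k \<noteq> lead f\<close> by blast
  next
    case False
    then have "k - u \<in> Poly_Mapping.keys g" using coeff by (auto simp: in_keys_iff)
    moreover have "k - u \<noteq> lead g" using \<open>k \<noteq> lead f\<close> by (auto simp: u_def)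
    ultimately have "k - u \<lessdot> lead g" using lead_g(2) by blast
    moreover have "u \<in> SM M" and "deg (u + lead g) = deg u + deg (lead g)"
      using dvd by (auto simp: u_def sdiv_iff)
    ultimately have "u + (k - u) \<lessdot> u + lead g"
      using g(2) lead_g(1) \<open>k - u \<in> Poly_Mapping.keys g\<close>
      by (intro sparse_less_add_left) auto
    then show ?thesis by (simp add: u_def)
  qed
qed

lemma ideal_lead_reduction:
  fixes f g :: "int ^ 'n \<Rightarrow>\<^sub>0 'k::field"
  assumes I: "is_ideal (salg (SM M)) I" and "f \<in> I" "f \<noteq> 0" "g \<in> I" "g \<noteq> 0"
    and dvd: "sdiv M (lead g) (lead f)"
  obtains m where "m \<in> salg (SM M)" and "f - m * g \<in> I"
    and "f - m * g \<noteq> 0 \<Longrightarrow> lead (f - m * g) \<lessdot> lead f"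
proof -
  have keys_I: "Poly_Mapping.keys h \<subseteq> SM M" if "h \<in> I" for h
    using that I by (auto simp: is_ideal_def salg_def)
  define m where "m = Poly_Mapping.single (lead f - lead g)
      (Poly_Mapping.lookup f (lead f) / Poly_Mapping.lookup g (lead g))"
  have "m \<in> salg (SM M)" and "- m \<in> salg (SM M)"
    using dvd by (auto simp: m_def salg_def sdiv_iff)
  then have "f + (- m) * g \<in> I" using I \<open>f \<in> I\<close> \<open>g \<in> I\<close> unfolding is_ideal_def by blast
  then have rest: "f - m * g \<in> I" by simp
  have "lead (f - m * g) \<lessdot> lead f" if "f - m * g \<noteq> 0"
  proof -
    have "\<forall>k\<in>Poly_Mapping.keys (f - m * g). k \<lessdot> lead f"
      unfolding m_def using assms by (intro keys_lead_cancel_less keys_I)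
    then show ?thesis using lead_greatest[OF that keys_I[OF rest]] by blast
  qed
  then show ?thesis using that \<open>m \<in> salg (SM M)\<close> rest by blast
qed

lemma ideal_subset_if_lead_sdiv:
  fixes I J G :: "(int ^ 'n \<Rightarrow>\<^sub>0 'k::field) set"
  assumes I: "is_ideal (salg (SM M)) I" and J: "is_ideal (salg (SM M)) J"
    and "G \<subseteq> I" and "G \<subseteq> J"
    and lead_dvd: "\<forall>f\<in>I. f \<noteq> 0 \<longrightarrow> (\<exists>g\<in>G. g \<noteq> 0 \<and> sdiv M (lead g) (lead f))"
  shows "I \<subseteq> J"
proof
  have lead_SM: "lead f \<in> SM M" if "f \<in> I" "f \<noteq> 0" for f
    using that I lead_in_SM[of f] by (auto simp: is_ideal_def salg_def)
  fix f assume "f \<in> I"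
  then show "f \<in> J"
  proof (induction f rule: wf_induct_rule[OF wf_inv_image[OF wf_sparse_less, of lead]])
    case (1 f)
    show ?case
    proof (cases "f = 0")
      case True
      then show ?thesis using J by (simp add: is_ideal_def)
    next
      case False
      then obtain g where "g \<in> G" "g \<noteq> 0" and dvd: "sdiv M (lead g) (lead f)"
        using lead_dvd "1.prems" by blast
      then obtain m where "m \<in> salg (SM M)" and rest: "f - m * g \<in> I"
        and less: "f - m * g \<noteq> 0 \<Longrightarrow> lead (f - m * g) \<lessdot> lead f"
        using ideal_lead_reduction[OF I "1.prems" False] \<open>G \<subseteq> I\<close> by blast
      have "f - m * g \<in> J"
      proof (cases "f - m * g = 0")
        case True
        then show ?thesis using J by (simp add: is_ideal_def)
      next
        case False
        then have "(f - m * g, f) \<in> inv_image {(s, r). s \<in> SM M \<and> r \<in> SM M \<and> s \<lessdot> r} lead"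
          using less lead_SM rest "1.prems" \<open>f \<noteq> 0\<close> by simp
        then show ?thesis using "1.IH" rest by blast
      qed
      moreover have "m * g \<in> J"
        using J \<open>m \<in> salg (SM M)\<close> \<open>g \<in> G\<close> \<open>G \<subseteq> J\<close> unfolding is_ideal_def by blast
      ultimately have "(f - m * g) + m * g \<in> J" using J unfolding is_ideal_def by blast
      then show ?thesis by simp
    qed
  qed
qed

lemma ideal_gen_eq_if_lead_sdiv:
  fixes I G :: "(int ^ 'n \<Rightarrow>\<^sub>0 'k::field) set"
  assumes "is_ideal (salg (SM M)) I" and "G \<subseteq> I"
    and "\<forall>f\<in>I. f \<noteq> 0 \<longrightarrow> (\<exists>g\<in>G. g \<noteq> 0 \<and> sdiv M (lead g) (lead f))"
  shows "ideal_gen (salg (SM M)) G = I"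
  unfolding ideal_gen_def
proof (rule antisym)
  show "\<Inter>{J. is_ideal (salg (SM M)) J \<and> G \<subseteq> J} \<subseteq> I"
    using assms(1,2) by (intro Inter_lower) simp
  show "I \<subseteq> \<Inter>{J. is_ideal (salg (SM M)) J \<and> G \<subseteq> J}"
    using ideal_subset_if_lead_sdiv[OF assms(1) _ assms(2) _ assms(3)]
    by (intro Inter_greatest) simp
qed

lemma exists_finite_lead_sdiv_subset:
  fixes I :: "(int ^ 'n \<Rightarrow>\<^sub>0 'k::field) set"
  assumes I: "is_ideal (salg (SM M)) I"
  shows "\<exists>G\<subseteq>I. finite G \<and> (\<forall>f\<in>I. f \<noteq> 0 \<longrightarrow> (\<exists>g\<in>G. g \<noteq> 0 \<and> sdiv M (lead g) (lead f)))"
proof -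
  let ?H = "{(s, 1::int) | s. s \<in> lattice_points M}"
  define homog_lead where "homog_lead f = homog M (lead f)" for f :: "int ^ 'n \<Rightarrow>\<^sub>0 'k"
  have lead_SM: "lead f \<in> SM M" if "f \<in> I - {0}" for f
    using that I lead_in_SM[of f] by (auto simp: is_ideal_def salg_def)
  have "?H = (\<lambda>s. (s, 1)) ` lattice_points M" by blast
  then have "finite ?H" using finite_lattice by simp
  moreover have "homog_lead ` (I - {0}) \<subseteq> monoid_gen ?H"
    using homog_in_SMh[OF lead_SM] unfolding homog_lead_def SMh_def by blast
  ultimately have "\<exists>F. finite_basis ?H (homog_lead ` (I - {0})) F"
    by (rule monoid_gen_finite_basis)
  then obtain F where F: "F \<subseteq> homog_lead ` (I - {0})" "finite F"
      "\<forall>e\<in>homog_lead ` (I - {0}). \<exists>f\<in>F. e - f \<in> monoid_gen ?H"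
    unfolding finite_basis_def by (elim exE conjE)
  from finite_subset_image[OF F(2,1)]
  obtain G where G: "G \<subseteq> I - {0}" "finite G" "F = homog_lead ` G"
    by (elim exE conjE)
  have "\<exists>g\<in>G. g \<noteq> 0 \<and> sdiv M (lead g) (lead f)" if "f \<in> I - {0}" for f
  proof -
    have "homog_lead f \<in> homog_lead ` (I - {0})" using that by (rule imageI)
    with F(3) obtain e where "e \<in> F" and diff: "homog_lead f - e \<in> monoid_gen ?H" by blast
    from \<open>e \<in> F\<close> obtain g where "g \<in> G" and "e = homog_lead g" unfolding G(3) by blast
    have "sdiv M (lead g) (lead f)"
    proof (rule sdiv_if_homog_diff)
      show "lead g \<in> SM M" using \<open>g \<in> G\<close> G(1) lead_SM by blast
      show "homog M (lead f) - homog M (lead g) \<in> SMh M"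
        using diff unfolding \<open>e = homog_lead g\<close> homog_lead_def SMh_def .
    qed
    then show ?thesis using \<open>g \<in> G\<close> G(1) by blast
  qed
  then show ?thesis using G(1,2) by blast
qed

theorem finite_sparse_groebner_basis_exists:
  fixes I :: "(int ^ 'n \<Rightarrow>\<^sub>0 'k::field) set"
  assumes "is_ideal (salg (SM M)) I"
  shows "\<exists>G. finite G \<and> sparse_groebner_basis M (\<lessdot>) I G"
proof -
  obtain G where "finite G" and "G \<subseteq> I"
    and lead_dvd: "\<forall>f\<in>I. f \<noteq> 0 \<longrightarrow> (\<exists>g\<in>G. g \<noteq> 0 \<and> sdiv M (lead g) (lead f))"
    using exists_finite_lead_sdiv_subset[OF assms] by blast
  moreover have "ideal_gen (salg (SM M)) G = I"
    using \<open>G \<subseteq> I\<close> lead_dvd by (rule ideal_gen_eq_if_lead_sdiv[OF assms])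
  ultimately show ?thesis by (auto simp: sparse_groebner_basis_def)
qed

end

theorem mainTheorem6:
  fixes M :: "(real ^ 'n) set"
    and lt :: "int ^ 'n \<Rightarrow> int ^ 'n \<Rightarrow> bool"
    and I :: "((int ^ 'n) \<Rightarrow>\<^sub>0 'k::field_char_0) set"
  assumes "is_polytope M"
    and "0 \<in> M"
    and "pointed (SM M)"
    and "pointed (SMh M)"
    and "monomial_order (SM M) lt"
    and "is_ideal (salg (SM M)) I"
  shows "\<exists>G. finite G \<and> sparse_groebner_basis M (sparse_order M lt) I G"
proof -
  obtain P where "finite P" and "M = convex hull P"
    using assms(1) unfolding is_polytope_def by blast
  then have "bounded M" by (simp add: compact_imp_bounded compact_convex_hull finite_imp_compact)
  interpret sparse_monomial_order M lt
    using finite_lattice_points[OF \<open>bounded M\<close>] assms(5) by (rule sparse_monomial_order.intro)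
  show ?thesis by (rule finite_sparse_groebner_basis_exists[OF assms(6)])
qed

end
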